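(* Let $R$ be a characteristic zero ring, $p$ an odd prime with $\bigcap_{s\ge1}p^sR=\{0\}$, and suppose $R$ is $p$-adically complete. Let $f\in R[x]$ be a monic polynomial of degree $d\ge2$ with $f(0)\ne0$ whose discriminant is invertible in $R$. Then $$\Omega_f^\circ\cap d\mathcal{O}_{\rm formal}= d\mathcal{O}_f .$$
   Context: $\mathcal{O}_f^\circ$ is the $R$-module generated by the rational functions $l!\,\frac{x^k}{f^{l+1}}$ with integers $l\ge0$ and $0\le k\le d(l+1)-2$; $\mathcal{O}_f$ is defined in the same way but with $0\le k\le d(l+1)-1$. Put $\Omega_f^\circ=\mathcal{O}_f^\circ\,dx$ and $d\mathcal{O}_f=\{dG: G\in\mathcal{O}_f\}$. Let $\mathcal{O}_{\rm formal}=\frac1xR[[1/x]]$ and $\Omega_{\rm formal}=\frac1x\mathcal{O}_{\rm formal}\,dx$; $d\mathcal{O}_{\rm formal}$ is the set of formal derivatives $dG$, $G\in\mathcal{O}_{\rm formal}$ (the "formally exact forms"). Elements of $\Omega_f^\circ$ are regarded as elements of $\Omega_{\rm formal}$ via expansion in powers of $1/x$ (possible since $f$ is monic). *)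

theory Defs
  imports "Subresultants.Resultant_Prelim" "HOL-Computational_Algebra.Polynomial_FPS"
begin

(* formal derivative over an arbitrary commutative ring (library pderiv needs no zero divisors) *)
definition formal_deriv :: "'a::comm_ring_1 poly \<Rightarrow> 'a poly" where
  "formal_deriv f = Poly (map (\<lambda>i. of_nat (Suc i) * coeff f (Suc i)) [0..<degree f])"

definition monic_discriminant :: "'a::comm_ring_1 poly \<Rightarrow> 'a" where
  "monic_discriminant f = (-1) ^ (degree f * (degree f - 1) div 2) * resultant f (formal_deriv f)"

definition p_adically_separated :: "nat \<Rightarrow> 'a::comm_ring_1 itself \<Rightarrow> bool" where
  "p_adically_separated p _ \<longleftrightarrow> (\<forall>x::'a. (\<forall>s\<ge>1. (of_nat p) ^ s dvd x) \<longrightarrow> x = 0)"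

definition p_adically_complete :: "nat \<Rightarrow> 'a::comm_ring_1 itself \<Rightarrow> bool" where
  "p_adically_complete p _ \<longleftrightarrow>
     (\<forall>a :: nat \<Rightarrow> 'a.
        (\<forall>s. \<exists>N. \<forall>m\<ge>N. \<forall>n\<ge>N. (of_nat p) ^ s dvd (a m - a n)) \<longrightarrow>
        (\<exists>L. \<forall>s. \<exists>N. \<forall>n\<ge>N. (of_nat p) ^ s dvd (a n - L)))"

(* Expansions in y = 1/x.  With F(y) = y^d f(1/y) = reflect_poly f (F(0) = 1 as f is monic),
   x^k / f^(l+1) = y^(d(l+1)-k) * F(y)^(-(l+1)). *)
definition rev_inv :: "'a::comm_ring_1 poly \<Rightarrow> 'a fps" where
  "rev_inv f = fps_right_inverse (fps_of_poly (reflect_poly f)) 1"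

definition gen_fps :: "'a::comm_ring_1 poly \<Rightarrow> nat \<Rightarrow> nat \<Rightarrow> 'a fps" where
  "gen_fps f l k = fps_const (of_nat (fact l)) * fps_X ^ (degree f * (l + 1) - k) * (rev_inv f) ^ (l + 1)"

(* R-module generated by the expansions of l! x^k / f^(l+1), (l,k) in the index set *)
definition span_gens :: "'a::comm_ring_1 poly \<Rightarrow> (nat \<times> nat) set \<Rightarrow> 'a fps set" where
  "span_gens f I = {(\<Sum>(l,k)\<in>S. fps_const (c (l,k)) * gen_fps f l k) | S c. finite S \<and> S \<subseteq> I}"

definition O_f_circ :: "'a::comm_ring_1 poly \<Rightarrow> 'a fps set" where
  "O_f_circ f = span_gens f {(l,k). k + 2 \<le> degree f * (l + 1)}"

definition O_f :: "'a::comm_ring_1 poly \<Rightarrow> 'a fps set" where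
  "O_f f = span_gens f {(l,k). k + 1 \<le> degree f * (l + 1)}"

(* O_formal = (1/x) R[[1/x]] : series in y = 1/x with zero constant term *)
definition O_formal :: "'a::comm_ring_1 fps set" where
  "O_formal = {G. fps_nth G 0 = 0}"

(* A differential form h(y) dx is represented by its coefficient h.
   d G = (dG/dx) dx = -y^2 G'(y) dx. *)
definition d_form :: "'a::comm_ring_1 fps \<Rightarrow> 'a fps" where
  "d_form G = - (fps_X ^ 2 * fps_deriv G)"

(* Omega_f^circ = O_f^circ dx, represented by coefficients of dx *)
definition Omega_f_circ :: "'a::comm_ring_1 poly \<Rightarrow> 'a fps set" where
  "Omega_f_circ f = O_f_circ f"

end

(*
  In the variable y = 1/x every element of Omega_f^circ is a combination of forms l! q/f^(l+1) dx
  with deg q + 2 <= d(l+1).  As the discriminant is a unit, f' w = 1 + f t for some w, t; writing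
  q w = f c + b gives q = f a + b f' with deg b < d, and
    (l+1)! q/f^(l+2) = (l+1) l! a/f^(l+1) + l! b'/f^(l+1) - d(l! b/f^(l+1)),
  so induction on l shows  Omega_f^circ  is contained in  dO_f + R[x]/f dx.

  If such a form dG + h/f dx is formally exact, so is h/f dx.  Its coefficients u_n (of x^(-n-1) dx)
  are divisible by n and satisfy the linear recurrence with characteristic polynomial f, i.e. the
  functional x^n |-> u_n on R[x] kills f R[x].  Since R[x]/(f) is etale, its relative Frobenius is
  onto modulo p, so modulo (f, p^s) every polynomial is a polynomial in x^(p^s); pairing with u gives
  p^s | u_n for all s, hence u = 0 by separatedness.
*)

theory Submission
  imports Defs "HOL-Computational_Algebra.Primes" "HOL-Computational_Algebra.Formal_Laurent_Series"
begin

interpretation ring_module: Modules.module "(*) :: 'a::comm_ring_1 \<Rightarrow> 'a \<Rightarrow> 'a"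
  by unfold_locales (simp_all add: algebra_simps)

declare ring_module.scale_scale [simp del] \<comment> \<open>reassociates products, looping with \<open>mult.assoc\<close>\<close>

definition cong_mod :: "'a::comm_ring_1 set \<Rightarrow> 'a \<Rightarrow> 'a \<Rightarrow> bool" where
  "cong_mod S a b \<longleftrightarrow> a - b \<in> ring_module.span S"

lemma cong_mod_refl [simp]: "cong_mod S a a"
  by (simp add: cong_mod_def ring_module.span_zero)

lemma cong_mod_sym: "cong_mod S a b \<Longrightarrow> cong_mod S b a"
  unfolding cong_mod_def by (metis minus_diff_eq ring_module.span_neg)

lemma cong_mod_trans [trans]: "cong_mod S a b \<Longrightarrow> cong_mod S b c \<Longrightarrow> cong_mod S a c"
  unfolding cong_mod_def by (metis diff_add_cancel add_diff_eq ring_module.span_add)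

lemma cong_mod_add: "cong_mod S a b \<Longrightarrow> cong_mod S c e \<Longrightarrow> cong_mod S (a + c) (b + e)"
  unfolding cong_mod_def by (metis add_diff_add ring_module.span_add)

lemma cong_mod_mult_left: "cong_mod S a b \<Longrightarrow> cong_mod S (c * a) (c * b)"
  unfolding cong_mod_def by (metis right_diff_distrib ring_module.span_scale)

lemma cong_mod_mult: "cong_mod S a b \<Longrightarrow> cong_mod S c e \<Longrightarrow> cong_mod S (a * c) (b * e)"
  by (metis cong_mod_mult_left cong_mod_trans mult.commute)

lemma cong_mod_power: "cong_mod S a b \<Longrightarrow> cong_mod S (a ^ n) (b ^ n)"
  by (induction n) (auto intro: cong_mod_mult)

lemma cong_mod_sum:
  "(\<And>i. i \<in> A \<Longrightarrow> cong_mod S (f i) (g i)) \<Longrightarrow> cong_mod S (\<Sum>i\<in>A. f i) (\<Sum>i\<in>A. g i)"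
  by (induction A rule: infinite_finite_induct) (auto intro: cong_mod_add)

lemma cong_mod_mono: "cong_mod S a b \<Longrightarrow> S \<subseteq> T \<Longrightarrow> cong_mod T a b"
  unfolding cong_mod_def using ring_module.span_mono by blast

lemma cong_mod_add_multiple: "g \<in> S \<Longrightarrow> cong_mod S (a + u * g) a"
  by (simp add: cong_mod_def ring_module.span_base ring_module.span_scale)

lemma span_singleton_iff: "x \<in> ring_module.span {g} \<longleftrightarrow> (\<exists>u. x = u * g)"
  by (auto simp: ring_module.span_singleton)

section \<open>The formal derivative and the resultant\<close>

lemma smult_eq_const_mult: "smult c p = [:c:] * p"
  by simp

interpretation const_poly: comm_ring_hom "\<lambda>c::'a::comm_ring_1. [:c:]"
  by unfold_locales auto

lemma coeff_formal_deriv: "coeff (formal_deriv f) n = of_nat (Suc n) * coeff f (Suc n)"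
proof (cases "n < degree f")
  case False
  then have "coeff f (Suc n) = 0" by (intro coeff_eq_0) auto
  with False show ?thesis unfolding formal_deriv_def by (simp add: nth_default_def)
qed (simp add: formal_deriv_def nth_default_def)

lemma formal_deriv_pCons: "formal_deriv (pCons a p) = p + pCons 0 (formal_deriv p)"
  by (rule poly_eqI) (auto simp: coeff_formal_deriv coeff_pCons algebra_simps split: nat.split)

lemma degree_formal_deriv_le: "degree (formal_deriv p) \<le> degree p - 1"
  by (rule degree_le) (auto simp: coeff_formal_deriv coeff_eq_0)

lemma sum_monom_coeff_rev:
  fixes P :: "'a::comm_semiring_1 poly"
  assumes "degree P \<le> N" "coeff P 0 = 0"
  shows "(\<Sum>j<N. monom (coeff P (N - j)) (N - j)) = P"
proof -
  have "(\<Sum>j<N. monom (coeff P (N - j)) (N - j)) = (\<Sum>k\<in>{1..N}. monom (coeff P k) k)"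
    by (rule sum.reindex_bij_witness[of _ "\<lambda>k. N - k" "\<lambda>j. N - j"]) auto
  also have "\<dots> = (\<Sum>k\<le>N. monom (coeff P k) k)"
    using assms(2) by (intro sum.mono_neutral_left) (auto simp: Suc_le_eq)
  also have "\<dots> = P" using poly_as_sum_of_monoms'[OF assms(1)] .
  finally show ?thesis .
qed

lemma sylvester_mat_mult_monomials:
  fixes f g :: "'a::comm_ring_1 poly"
  defines "N \<equiv> degree f + degree g"
  shows "map_mat (\<lambda>c. [:c:]) (sylvester_mat f g) *\<^sub>v vec N (\<lambda>j. monom 1 (N - j)) =
    vec N (\<lambda>i. if i < degree g then monom 1 (degree g - i) * f else monom 1 (N - i) * g)"
    (is "?S *\<^sub>v ?X = vec N ?P")
proof (rule eq_vecI)
  fix i assume "i < dim_vec (vec N ?P)"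
  then have i: "i < N" by simp
  have deg: "degree (monom (1::'a) k * h) \<le> k + degree h" for k h
    using degree_mult_le[of "monom 1 k" h] degree_monom_le[of "1::'a" k] by linarith
  have "degree (?P i) \<le> N"
    using i deg[of "degree g - i" f] deg[of "N - i" g] by (auto simp: N_def)
  moreover have "coeff (?P i) 0 = 0"
    using i by (auto simp: N_def coeff_monom_mult)
  moreover have "(?S *\<^sub>v ?X) $ i = (\<Sum>j<N. monom (coeff (?P i) (N - j)) (N - j))"
    using i by (auto simp: N_def scalar_prod_def lessThan_atLeast0 sylvester_index_mat2
        smult_monom intro!: sum.cong)
  ultimately show "(?S *\<^sub>v ?X) $ i = vec N ?P $ i"
    using i by (simp only: sum_monom_coeff_rev index_vec)
qed (simp add: N_def)

lemma resultant_in_ideal: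
  fixes f g :: "'a::comm_ring_1 poly"
  assumes "degree f + degree g > 0"
  shows "[:resultant f g:] \<in> ring_module.span {f, g}"
proof -
  define n where "n = degree g"
  define N where "N = degree f + degree g"
  define S where "S = map_mat (\<lambda>c. [:c:]) (sylvester_mat f g)"
  define X where "X = vec N (\<lambda>j. monom (1::'a) (N - j))"
  define P where "P i = (if i < n then monom 1 (n - i) * f else monom 1 (N - i) * g)" for i
  define P' where "P' i = (if i < n then monom 1 (n - i - 1) * f else monom 1 (N - i - 1) * g)" for i
  have S: "S \<in> carrier_mat N N" by (simp add: S_def N_def sylvester_carrier_mat)
  have N: "N - 1 < N" using assms by (simp add: N_def)
  have "det S \<cdot>\<^sub>m 1\<^sub>m N *\<^sub>v X = (adj_mat S * S) *\<^sub>v X"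
    using adj_mat(3)[OF S] by simp
  also have "\<dots> = adj_mat S *\<^sub>v (S *\<^sub>v X)"
    using S by (intro assoc_mult_mat_vec[OF adj_mat(1)[OF S]]) (auto simp: X_def)
  also have "S *\<^sub>v X = vec N P"
    unfolding S_def X_def P_def n_def N_def by (rule sylvester_mat_mult_monomials)
  finally have SX: "det S \<cdot>\<^sub>m 1\<^sub>m N *\<^sub>v X = adj_mat S *\<^sub>v vec N P" .
  have "det S * monom 1 1 = (\<Sum>i\<in>{0..<N}. det S * (if i = N - 1 then 1 else 0) * monom 1 (N - i))"
    using N by (subst sum.remove[where x = "N - 1"]) auto
  also have "\<dots> = (det S \<cdot>\<^sub>m 1\<^sub>m N *\<^sub>v X) $ (N - 1)"
    using N by (simp add: X_def scalar_prod_def)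
  also have "\<dots> = (\<Sum>i<N. adj_mat S $$ (N - 1, i) * P i)"
    using N adj_mat(1)[OF S] unfolding SX by (simp add: scalar_prod_def lessThan_atLeast0)
  also have "\<dots> = monom 1 1 * (\<Sum>i<N. adj_mat S $$ (N - 1, i) * P' i)"
  proof -
    have "P i = monom 1 1 * P' i" if "i < N" for i
      using that by (simp add: P_def P'_def mult.assoc[symmetric] mult_monom N_def n_def Suc_diff_Suc)
    then show ?thesis
      unfolding sum_distrib_left by (intro sum.cong refl) (simp add: mult.left_commute)
  qed
  finally have "det S = (\<Sum>i<N. adj_mat S $$ (N - 1, i) * P' i)"
    by (simp add: monom_Suc mult_pCons_left mult_pCons_right)
  moreover have "det S = [:resultant f g:]"
    by (simp add: S_def resultant_def)
  moreover have "adj_mat S $$ (N - 1, i) * P' i \<in> ring_module.span {f, g}" for i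
    unfolding P'_def mult.assoc[symmetric]
    by (simp add: ring_module.span_base ring_module.span_scale)
  ultimately show ?thesis
    by (simp add: ring_module.span_sum)
qed

lemma formal_deriv_invertible_mod:
  fixes f :: "'a::comm_ring_1 poly"
  assumes "monic_discriminant f dvd 1" and "degree f \<ge> 1"
  obtains w t where "formal_deriv f * w = 1 + f * t"
proof -
  have "resultant f (formal_deriv f) dvd 1"
    using assms(1) unfolding monic_discriminant_def by (rule dvd_mult_right)
  then obtain k where k: "resultant f (formal_deriv f) * k = 1"
    by (metis dvdE)
  obtain u v where uv: "[:resultant f (formal_deriv f):] = v * formal_deriv f + u * f"
    using resultant_in_ideal[of f "formal_deriv f"] assms(2)
    by (auto simp: ring_module.span_breakdown_eq span_singleton_iff insert_commute) (metis diff_eq_eq add.commute)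
  have "1 = smult k [:resultant f (formal_deriv f):]"
    using k by (simp add: mult.commute)
  also have "\<dots> = smult k v * formal_deriv f + smult k u * f"
    unfolding uv by (simp add: smult_add_right)
  finally show ?thesis
    by (intro that[of "smult k v" "- smult k u"]) (simp add: algebra_simps)
qed

section \<open>Linear recurrences\<close>

definition satisfies_linrec :: "'a::comm_ring_1 poly \<Rightarrow> (nat \<Rightarrow> 'a) \<Rightarrow> bool" where
  "satisfies_linrec f u \<longleftrightarrow> (\<forall>j. (\<Sum>k\<le>degree f. coeff f k * u (j + k)) = 0)"

definition seq_pairing :: "(nat \<Rightarrow> 'a::comm_ring_1) \<Rightarrow> 'a poly \<Rightarrow> 'a" where
  "seq_pairing u q = (\<Sum>j\<le>degree q. coeff q j * u j)"

lemma seq_pairing_bound: "degree q \<le> N \<Longrightarrow> seq_pairing u q = (\<Sum>j\<le>N. coeff q j * u j)"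
  unfolding seq_pairing_def by (rule sum.mono_neutral_left) (auto simp: coeff_eq_0)

lemma seq_pairing_0 [simp]: "seq_pairing u 0 = 0"
  by (simp add: seq_pairing_def)

lemma seq_pairing_add: "seq_pairing u (a + b) = seq_pairing u a + seq_pairing u b"
proof -
  define N where "N = max (degree a) (degree b)"
  have "degree (a + b) \<le> N" unfolding N_def by (rule degree_add_le_max)
  then show ?thesis
    using seq_pairing_bound[of a N u] seq_pairing_bound[of b N u] seq_pairing_bound[of "a + b" N u]
    by (simp add: N_def sum.distrib algebra_simps)
qed

lemma seq_pairing_smult: "seq_pairing u (smult c a) = c * seq_pairing u a"
proof -
  have "seq_pairing u (smult c a) = (\<Sum>j\<le>degree a. coeff (smult c a) j * u j)"
    by (rule seq_pairing_bound[OF degree_smult_le])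
  also have "\<dots> = c * seq_pairing u a"
    by (simp only: seq_pairing_def coeff_smult sum_distrib_left mult.assoc)
  finally show ?thesis .
qed

lemma seq_pairing_diff: "seq_pairing u (a - b) = seq_pairing u a - seq_pairing u b"
  using seq_pairing_add[of u "a - b" b] by simp

lemma seq_pairing_sum: "seq_pairing u (\<Sum>i\<in>A. g i) = (\<Sum>i\<in>A. seq_pairing u (g i))"
  by (induction A rule: infinite_finite_induct) (auto simp: seq_pairing_add)

lemma seq_pairing_monom: "seq_pairing u (monom c k) = c * u k"
proof -
  have "seq_pairing u (monom c k) = (\<Sum>j\<le>k. coeff (monom c k) j * u j)"
    by (rule seq_pairing_bound[OF degree_monom_le])
  also have "\<dots> = (\<Sum>j\<le>k. if j = k then c * u j else 0)"
    by (rule sum.cong) (auto simp: coeff_monom)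
  finally show ?thesis by simp
qed

lemma seq_pairing_pCons: "seq_pairing u (pCons a q) = a * u 0 + seq_pairing (\<lambda>j. u (Suc j)) q"
proof -
  have "seq_pairing u (pCons a q) = (\<Sum>j\<le>Suc (degree q). coeff (pCons a q) j * u j)"
    by (rule seq_pairing_bound[OF degree_pCons_le])
  also have "\<dots> = a * u 0 + (\<Sum>j\<le>degree q. coeff q j * u (Suc j))"
    by (subst sum.atMost_Suc_shift) simp
  finally show ?thesis by (simp add: seq_pairing_def)
qed

lemma seq_pairing_mult_eq_0:
  assumes "satisfies_linrec f u"
  shows "seq_pairing u (f * q) = 0"
  using assms
proof (induction q arbitrary: u)
  case (pCons a q)
  have "seq_pairing u f = 0"
    using pCons.prems[unfolded satisfies_linrec_def, rule_format, of 0] by (simp add: seq_pairing_def)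
  moreover have "satisfies_linrec f (\<lambda>j. u (Suc j))"
    using pCons.prems by (auto simp: satisfies_linrec_def dest: spec[of _ "Suc _"])
  ultimately show ?case
    using pCons.IH by (simp add: mult_pCons_right seq_pairing_add seq_pairing_smult seq_pairing_pCons)
qed simp

lemma satisfies_linrec_of_fps:
  fixes f :: "'a::comm_ring_1 poly" and G :: "'a fps"
  assumes "\<And>m. m > degree f \<Longrightarrow> (fps_of_poly (reflect_poly f) * G) $ m = 0"
  shows "satisfies_linrec f (\<lambda>j. G $ Suc j)"
  unfolding satisfies_linrec_def
proof
  fix j
  define d where "d = degree f"
  define F where "F = fps_of_poly (reflect_poly f)"
  have "0 = (F * G) $ (j + d + 1)" using assms by (simp add: F_def d_def)
  also have "\<dots> = (\<Sum>i=0..d. F $ i * G $ (j + d + 1 - i))"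
    unfolding fps_mult_nth
    by (rule sum.mono_neutral_right) (auto simp: F_def d_def coeff_reflect_poly)
  also have "\<dots> = (\<Sum>k\<le>d. coeff f k * G $ Suc (j + k))"
    by (rule sum.reindex_bij_witness[of _ "\<lambda>k. d - k" "\<lambda>i. d - i"])
      (auto simp: F_def d_def coeff_reflect_poly Suc_diff_le)
  finally show "(\<Sum>k\<le>degree f. coeff f k * G $ Suc (j + k)) = 0" by (simp add: d_def)
qed

lemma reflect_poly_mult_rev_inv:
  assumes "lead_coeff f = 1"
  shows "fps_of_poly (reflect_poly f) * rev_inv f = 1"
  unfolding rev_inv_def by (rule fps_right_inverse) (simp add: assms)

text \<open>The solution with initial values \<open>0, \<dots>, 0, 1\<close> consists of the coefficients of the
  expansion of \<open>1/f\<close> in powers of \<open>1/x\<close>.\<close>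

lemma linrec_fundamental_solution:
  fixes f :: "'a::comm_ring_1 poly"
  assumes "lead_coeff f = 1" and "degree f \<ge> 1"
  obtains v where "satisfies_linrec f v" and "\<And>j. j < degree f \<Longrightarrow> v j = of_bool (j = degree f - 1)"
proof
  define G where "G = fps_X ^ degree f * rev_inv f"
  have "fps_of_poly (reflect_poly f) * G = fps_X ^ degree f"
    using reflect_poly_mult_rev_inv[OF assms(1)] by (metis G_def mult.left_commute mult_1_right)
  then show "satisfies_linrec f (\<lambda>j. G $ Suc j)"
    by (intro satisfies_linrec_of_fps) (simp add: fps_X_power_nth)
  have "rev_inv f $ 0 = 1"
    using arg_cong[OF reflect_poly_mult_rev_inv[OF assms(1)], of "\<lambda>F :: 'a fps. F $ 0"] assms(1) by simp
  then show "G $ Suc j = of_bool (j = degree f - 1)" if "j < degree f" for j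
    using that assms(2) by (auto simp: G_def fps_X_power_mult_nth)
qed

section \<open>Frobenius modulo \<open>p\<close>\<close>

lemma cong_mod_prime_power_add:
  fixes a b :: "'a::comm_ring_1"
  assumes "prime p"
  shows "cong_mod {of_nat p} ((a + b) ^ p) (a ^ p + b ^ p)"
proof -
  have "p > 0" using assms prime_gt_0_nat by blast
  have "(a + b) ^ p = (\<Sum>k\<le>p. of_nat (p choose k) * a ^ k * b ^ (p - k))"
    by (rule binomial_ring)
  also have "\<dots> = (a ^ p + b ^ p) + (\<Sum>k\<in>{..p} - {0, p}. of_nat (p choose k) * a ^ k * b ^ (p - k))"
    using \<open>p > 0\<close> by (subst sum.subset_diff[of "{0, p}"]) auto
  finally have "(a + b) ^ p - (a ^ p + b ^ p) =
      (\<Sum>k\<in>{..p} - {0, p}. of_nat (p choose k) * a ^ k * b ^ (p - k))"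
    by simp
  moreover have "of_nat (p choose k) * a ^ k * b ^ (p - k) \<in> ring_module.span {of_nat p}"
    if "k \<in> {..p} - {0, p}" for k
  proof -
    have "p dvd p choose k" using assms that by (intro dvd_choose_prime) auto
    then obtain m where "p choose k = p * m" by blast
    then show ?thesis
      by (simp add: span_singleton_iff) (metis mult.commute mult.left_commute)
  qed
  ultimately show ?thesis
    unfolding cong_mod_def by (simp only:) (rule ring_module.span_sum, blast)
qed

lemma cong_mod_prime_power_sum:
  fixes g :: "'b \<Rightarrow> 'a::comm_ring_1"
  assumes "prime p"
  shows "cong_mod {of_nat p} ((\<Sum>i\<in>A. g i) ^ p) (\<Sum>i\<in>A. g i ^ p)"
proof (induction A rule: infinite_finite_induct)
  case (insert x F)
  have "cong_mod {of_nat p} (g x ^ p + sum g F ^ p) (g x ^ p + (\<Sum>i\<in>F. g i ^ p))"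
    by (intro cong_mod_add cong_mod_refl insert.IH)
  with insert.hyps show ?case
    using cong_mod_trans[OF cong_mod_prime_power_add[OF assms]] by simp
qed (use assms prime_gt_0_nat in \<open>simp_all add: zero_power\<close>)

definition frob_poly :: "nat \<Rightarrow> 'a::comm_semiring_1 poly \<Rightarrow> 'a poly" where
  "frob_poly p E = (\<Sum>j\<le>degree E. monom (coeff E j ^ p) (p * j))"

lemma cong_mod_power_prime_poly:
  fixes E :: "'a::comm_ring_1 poly"
  assumes "prime p"
  shows "cong_mod {of_nat p} (E ^ p) (frob_poly p E)"
proof -
  have "cong_mod {of_nat p} ((\<Sum>j\<le>degree E. monom (coeff E j) j) ^ p)
      (\<Sum>j\<le>degree E. monom (coeff E j) j ^ p)"
    by (rule cong_mod_prime_power_sum[OF assms])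
  then show ?thesis
    by (simp add: poly_as_sum_of_monoms frob_poly_def monom_power mult.commute)
qed

definition poly_in_xpow :: "nat \<Rightarrow> 'a::zero poly \<Rightarrow> bool" where
  "poly_in_xpow N q \<longleftrightarrow> (\<forall>k. coeff q k \<noteq> 0 \<longrightarrow> N dvd k)"

lemma poly_in_xpow_0 [simp]: "poly_in_xpow N 0"
  by (simp add: poly_in_xpow_def)

lemma poly_in_xpow_add: "poly_in_xpow N a \<Longrightarrow> poly_in_xpow N b \<Longrightarrow> poly_in_xpow N (a + b)"
  unfolding poly_in_xpow_def by (metis add.left_neutral add.right_neutral coeff_add)

lemma poly_in_xpow_smult: "poly_in_xpow N a \<Longrightarrow> poly_in_xpow N (smult c a)"
  unfolding poly_in_xpow_def by (metis coeff_smult mult_zero_right)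

lemma poly_in_xpow_sum: "(\<And>i. i \<in> A \<Longrightarrow> poly_in_xpow N (g i)) \<Longrightarrow> poly_in_xpow N (\<Sum>i\<in>A. g i)"
  by (induction A rule: infinite_finite_induct) (auto intro: poly_in_xpow_add)

lemma poly_in_xpow_frob_poly:
  assumes "poly_in_xpow N r"
  shows "poly_in_xpow (p * N) (frob_poly p r)"
  unfolding frob_poly_def
proof (intro poly_in_xpow_sum)
  fix j
  show "poly_in_xpow (p * N) (monom (coeff r j ^ p) (p * j))"
    using assms by (cases "coeff r j = 0") (auto simp: poly_in_xpow_def coeff_monom zero_power)
qed

lemma seq_pairing_poly_in_xpow_dvd:
  assumes "poly_in_xpow N r" and "\<And>n. N dvd n \<Longrightarrow> c dvd u n"
  shows "c dvd seq_pairing u r"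
  unfolding seq_pairing_def
proof (rule dvd_sum)
  fix j
  show "c dvd coeff r j * u j"
    using assms by (cases "coeff r j = 0") (auto simp: poly_in_xpow_def)
qed

section \<open>The diagonal idempotent of \<open>R[x]/(f)\<close>\<close>

text \<open>We work in \<open>R[x][y]\<close>, encoded as \<open>'a poly poly\<close> with outer variable \<open>y = [:0, 1:]\<close> and
  \<open>x = [:[:0, 1:]:]\<close>; thus \<open>lift_coeffs q\<close> is \<open>q(y)\<close> and \<open>[:q:]\<close> is \<open>q(x)\<close>.\<close>

definition lift_coeffs :: "'a::comm_ring_1 poly \<Rightarrow> 'a poly poly" where
  "lift_coeffs q = map_poly (\<lambda>c. [:c:]) q"

interpretation lift_hom: map_poly_comm_ring_hom "\<lambda>c::'a::comm_ring_1. [:c:]" ..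

lemma coeff_lift_coeffs [simp]: "coeff (lift_coeffs q) k = [:coeff q k:]"
  by (simp add: lift_coeffs_def)

lemma degree_lift_coeffs [simp]: "degree (lift_coeffs q) = degree q"
  unfolding lift_coeffs_def by (rule degree_map_poly) auto

lemma lift_coeffs_mult: "lift_coeffs (a * b) = lift_coeffs a * lift_coeffs b"
  by (simp add: lift_coeffs_def lift_hom.hom_mult)

lemma lift_coeffs_monom: "lift_coeffs (monom c k) = [:[:c:]:] * [:0, 1:] ^ k"
  using monom_altdef[of "[:c:]" k] by (simp add: lift_coeffs_def map_poly_monom)

lemma poly_lift_coeffs_diag [simp]: "poly (lift_coeffs q) [:0, 1:] = q"
  by (induction q) (auto simp: lift_coeffs_def lift_hom.map_poly_pCons_hom)

lemma lift_coeffs_as_sum: "lift_coeffs f = (\<Sum>k\<le>degree f. [:[:coeff f k:]:] * [:0, 1:] ^ k)"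
  by (subst poly_as_sum_of_monoms[symmetric]) (simp add: monom_altdef)

lemma const_poly_as_sum:
  fixes f :: "'a::comm_ring_1 poly"
  shows "[:f:] = (\<Sum>k\<le>degree f. [:[:coeff f k:]:] * [:[:0, 1:]:] ^ k)"
proof -
  have "[:f:] = [:\<Sum>k\<le>degree f. [:coeff f k:] * [:0, 1:] ^ k:]"
    by (subst poly_as_sum_of_monoms[symmetric]) (simp add: monom_altdef)
  also have "\<dots> = (\<Sum>k\<le>degree f. [:[:coeff f k:]:] * [:[:0, 1:]:] ^ k)"
    by (simp only: const_poly.hom_sum const_poly.hom_mult const_poly.hom_power)
  finally show ?thesis .
qed

lemma satisfies_linrec_lift_coeffs:
  "satisfies_linrec f v \<Longrightarrow> satisfies_linrec (lift_coeffs f) (\<lambda>j. [:v j:])"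
  unfolding satisfies_linrec_def
  by (simp only: degree_lift_coeffs coeff_lift_coeffs const_poly.hom_mult[symmetric]
      const_poly.hom_sum[symmetric]) simp

lemma seq_pairing_lift_coeffs:
  "seq_pairing (\<lambda>j. [:v j:]) (lift_coeffs q) = [:seq_pairing v q:]"
  unfolding seq_pairing_def
  by (simp only: degree_lift_coeffs coeff_lift_coeffs const_poly.hom_mult const_poly.hom_sum)

text \<open>\<open>diff_quotient f = (f(y) - f(x)) / (y - x)\<close>\<close>

definition diff_quotient :: "'a::comm_ring_1 poly \<Rightarrow> 'a poly poly" where
  "diff_quotient f =
    (\<Sum>k\<le>degree f. [:[:coeff f k:]:] * (\<Sum>j<k. [:[:0, 1:]:] ^ (k - Suc j) * [:0, 1:] ^ j))"

lemma diff_quotient_mult: "([:0, 1:] - [:[:0, 1:]:]) * diff_quotient f = lift_coeffs f - [:f:]"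
proof -
  have "([:0, 1:] - [:[:0, 1:]:]) * diff_quotient f =
      (\<Sum>k\<le>degree f. [:[:coeff f k:]:] * ([:0, 1:] ^ k - [:[:0, 1:]:] ^ k))"
    unfolding diff_quotient_def sum_distrib_left[of "[:0, 1:] - [:[:0, 1:]:]"]
    by (intro sum.cong refl) (subst power_diff_sumr2, rule mult.left_commute)
  also have "\<dots> = lift_coeffs f - [:f:]"
    by (simp only: right_diff_distrib sum_subtractf lift_coeffs_as_sum[symmetric]
        const_poly_as_sum[symmetric])
  finally show ?thesis .
qed

lemma formal_deriv_as_sum:
  "formal_deriv f = (\<Sum>k\<le>degree f. [:coeff f k:] * monom (of_nat k) (k - 1))"
proof (rule poly_eqI)
  fix n
  have "coeff (\<Sum>k\<le>degree f. [:coeff f k:] * monom (of_nat k) (k - 1)) n =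
      (\<Sum>k\<le>degree f. coeff f k * coeff (monom (of_nat k) (k - 1)) n)"
    by (simp add: coeff_sum)
  also have "\<dots> = (\<Sum>k\<le>degree f. if k = Suc n then coeff f k * of_nat k else 0)"
  proof (rule sum.cong[OF refl])
    fix k
    show "coeff f k * coeff (monom (of_nat k) (k - 1)) n = (if k = Suc n then coeff f k * of_nat k else 0)"
      by (cases k) (auto simp: coeff_monom)
  qed
  also have "\<dots> = coeff (formal_deriv f) n"
    by (auto simp: coeff_formal_deriv coeff_eq_0 mult.commute)
  finally show "coeff (formal_deriv f) n = coeff (\<Sum>k\<le>degree f. [:coeff f k:] * monom (of_nat k) (k - 1)) n"
    by simp
qed

lemma poly_diff_quotient_diag: "poly (diff_quotient f) [:0, 1:] = formal_deriv f"
proof -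
  have "poly (\<Sum>j<k. [:[:0, 1:]:] ^ (k - Suc j) * [:0, 1:] ^ j) [:0, 1::'a:] = monom (of_nat k) (k - 1)"
    for k
  proof -
    have "[:0, 1::'a:] ^ (k - Suc j) * [:0, 1:] ^ j = monom 1 (k - 1)" if "j < k" for j
      using that by (simp add: monom_altdef power_add[symmetric])
    then show ?thesis
      by (simp add: poly_sum sum.cong[of _ _ _ "\<lambda>_. monom 1 (k - 1)"] of_nat_poly smult_monom)
  qed
  then show ?thesis
    by (simp add: diff_quotient_def poly_sum formal_deriv_as_sum)
qed

lemma seq_pairing_diff_quotient:
  assumes "degree f \<ge> 1" and "\<And>j. j < degree f \<Longrightarrow> v j = of_bool (j = degree f - 1)"
  shows "seq_pairing (\<lambda>j. [:v j:]) (diff_quotient f) = [:lead_coeff f:]"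
proof -
  have "seq_pairing (\<lambda>j. [:v j:]) (\<Sum>j<k. [:[:0, 1:]:] ^ (k - Suc j) * [:0, 1:] ^ j) = of_bool (k = degree f)"
    if "k \<le> degree f" for k
  proof -
    have "[:[:0, 1:]:] ^ (k - Suc j) * [:0, 1:] ^ j = monom ([:0, 1::'a:] ^ (k - Suc j)) j" for j
      by (simp add: monom_altdef const_poly.hom_power[symmetric])
    then have "seq_pairing (\<lambda>j. [:v j:]) (\<Sum>j<k. [:[:0, 1:]:] ^ (k - Suc j) * [:0, 1:] ^ j) =
        (\<Sum>j<k. [:0, 1:] ^ (k - Suc j) * [:v j:])"
      by (simp add: seq_pairing_sum seq_pairing_monom)
    also have "\<dots> = (\<Sum>j<k. if j = degree f - 1 then [:0, 1:] ^ (k - Suc j) else 0)"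
      using that assms by (intro sum.cong) auto
    also have "\<dots> = of_bool (k = degree f)"
      using that assms(1) by auto
    finally show ?thesis .
  qed
  then have "seq_pairing (\<lambda>j. [:v j:]) (diff_quotient f) =
      (\<Sum>k\<le>degree f. smult (coeff f k) (of_bool (k = degree f)))"
    by (simp add: diff_quotient_def seq_pairing_sum seq_pairing_smult)
  also have "\<dots> = [:lead_coeff f:]"
    by (subst sum.remove[where x = "degree f"]) auto
  finally show ?thesis .
qed

text \<open>Since \<open>(y - x) \<cdot> diff_quotient f \<equiv> 0\<close> modulo \<open>(f(x), f(y))\<close>, multiples of
  \<open>diff_quotient f\<close> only see the restriction of a factor to the diagonal \<open>y = x\<close>.\<close>

lemma cong_mod_mult_diff_quotient:
  fixes h a :: "'a::comm_ring_1 poly poly"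
  shows "cong_mod {[:f:], lift_coeffs f} (h * (a * diff_quotient f)) ([:poly h [:0, 1:]:] * (a * diff_quotient f))"
proof -
  have "[:- [:0, 1:], 1:] dvd h - [:poly h [:0, 1:]:]"
    by (rule poly_eq_0_iff_dvd[THEN iffD1]) simp
  then obtain k where k: "h - [:poly h [:0, 1:]:] = [:- [:0, 1:], 1:] * k"
    by (rule dvdE)
  have "h * (a * diff_quotient f) - [:poly h [:0, 1:]:] * (a * diff_quotient f) =
      (h - [:poly h [:0, 1:]:]) * (a * diff_quotient f)"
    by (rule left_diff_distrib[symmetric])
  also have "\<dots> = (k * a) * (([:0, 1:] - [:[:0, 1:]:]) * diff_quotient f)"
  proof -
    have "[:- [:0, 1:], 1:] = [:0, 1:] - [:[:0, 1::'a:]:]" by simp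
    then show ?thesis unfolding k by (simp only: ac_simps)
  qed
  also have "\<dots> = (k * a) * lift_coeffs f - (k * a) * [:f:]"
    by (simp only: diff_quotient_mult right_diff_distrib)
  finally show ?thesis
    unfolding cong_mod_def
    by (simp only:) (intro ring_module.span_diff ring_module.span_scale ring_module.span_base; simp)
qed

lemma diag_idempotent_square:
  fixes f w t :: "'a::comm_ring_1 poly"
  assumes "formal_deriv f * w = 1 + f * t"
  defines "e \<equiv> [:w:] * diff_quotient f"
  shows "cong_mod {[:f:], lift_coeffs f} (e * e) e"
proof -
  have "poly e [:0, 1:] = w * formal_deriv f"
    by (simp only: e_def poly_mult poly_diff_quotient_diag poly_pCons poly_0 mult_zero_right add_0_right)
  then have "poly e [:0, 1:] = 1 + f * t"
    using assms(1) by (simp only: mult.commute)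
  moreover have "cong_mod {[:f:], lift_coeffs f} (e * e) ([:poly e [:0, 1:]:] * e)"
    using cong_mod_mult_diff_quotient[of f e "[:w:]"] by (simp only: e_def)
  ultimately have "cong_mod {[:f:], lift_coeffs f} (e * e) ([:1 + f * t:] * e)"
    by simp
  also have "[:1 + f * t:] * e = e + ([:t:] * e) * [:f:]"
    by (simp only: const_poly.hom_add const_poly.hom_mult const_poly.hom_one mult_1_left algebra_simps)
  also have "cong_mod {[:f:], lift_coeffs f} \<dots> e"
    by (rule cong_mod_add_multiple) simp
  finally show ?thesis .
qed

lemma diag_idempotent_power:
  fixes f w t :: "'a::comm_ring_1 poly"
  assumes "formal_deriv f * w = 1 + f * t"
  shows "cong_mod {[:f:], lift_coeffs f} (([:w:] * diff_quotient f) ^ Suc n) ([:w:] * diff_quotient f)"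
proof (induction n)
  case (Suc n)
  then have "cong_mod {[:f:], lift_coeffs f} (([:w:] * diff_quotient f) ^ Suc (Suc n))
      (([:w:] * diff_quotient f) * ([:w:] * diff_quotient f))"
    unfolding power_Suc[of _ "Suc n"] by (rule cong_mod_mult_left)
  then show ?case
    using diag_idempotent_square[OF assms] by (rule cong_mod_trans)
qed simp

lemma lift_deriv_mult_diag_idempotent:
  fixes f w t b :: "'a::comm_ring_1 poly"
  assumes "formal_deriv f * w = 1 + f * t"
  shows "cong_mod {[:f:], lift_coeffs f}
    (lift_coeffs (b * formal_deriv f) * ([:w:] * diff_quotient f)) ([:b:] * diff_quotient f)"
proof -
  have "cong_mod {[:f:], lift_coeffs f}
      (lift_coeffs (b * formal_deriv f) * ([:w:] * diff_quotient f))
      ([:b * formal_deriv f:] * ([:w:] * diff_quotient f))"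
    using cong_mod_mult_diff_quotient[of f "lift_coeffs (b * formal_deriv f)" "[:w:]"]
    by (simp only: poly_lift_coeffs_diag)
  also have "[:b * formal_deriv f:] * ([:w:] * diff_quotient f) =
      [:b:] * ([:formal_deriv f * w:] * diff_quotient f)"
    by (simp only: const_poly.hom_mult ac_simps)
  also have "\<dots> = [:b:] * diff_quotient f + ([:b * t:] * diff_quotient f) * [:f:]"
    unfolding assms
    by (simp only: const_poly.hom_add const_poly.hom_mult const_poly.hom_one mult_1_left algebra_simps)
  also have "cong_mod {[:f:], lift_coeffs f} \<dots> ([:b:] * diff_quotient f)"
    by (rule cong_mod_add_multiple) simp
  finally show ?thesis .
qed

lemma cong_mod_seq_pairing_lift:
  fixes f c :: "'a::comm_ring_1 poly"
  assumes "satisfies_linrec f v" and "cong_mod {[:f:], lift_coeffs f, [:c:]} a b"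
  shows "cong_mod {f, c} (seq_pairing (\<lambda>j. [:v j:]) a) (seq_pairing (\<lambda>j. [:v j:]) b)"
proof -
  obtain u1 u2 u3 where "a - b - u1 * [:f:] - u2 * lift_coeffs f - u3 * [:c:] = 0"
    using assms(2) unfolding cong_mod_def ring_module.span_breakdown_eq ring_module.span_empty by blast
  then have "a - b = u1 * [:f:] + u2 * lift_coeffs f + u3 * [:c:]"
    by (simp add: algebra_simps)
  then have "seq_pairing (\<lambda>j. [:v j:]) a - seq_pairing (\<lambda>j. [:v j:]) b =
      seq_pairing (\<lambda>j. [:v j:]) u1 * f + seq_pairing (\<lambda>j. [:v j:]) u3 * c"
    using seq_pairing_mult_eq_0[OF satisfies_linrec_lift_coeffs[OF assms(1)], of u2]
    by (simp add: seq_pairing_diff[symmetric] seq_pairing_add seq_pairing_smult mult.commute)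
  then show ?thesis
    unfolding cong_mod_def
    by (simp add: ring_module.span_add ring_module.span_scale ring_module.span_base)
qed

section \<open>Divisible recurrence sequences vanish\<close>

text \<open>Reduction modulo \<open>p\<close> of the relative Frobenius of \<open>R[x]/(f)\<close> is surjective: apply the
  functional \<open>y\<^sup>j \<mapsto> v\<^sub>j\<close> (which kills \<open>f(y)\<close> and maps \<open>diff_quotient f\<close> to \<open>1\<close>) to
  \<open>b(x) diff_quotient f \<equiv> b(y) f'(y) e \<equiv> b(y) f'(y) e\<^sup>p\<close>, where \<open>e\<close> is the diagonal idempotent.\<close>

lemma frobenius_spans_mod_prime:
  fixes f w t b :: "'a::comm_ring_1 poly"
  assumes monic: "lead_coeff f = 1" and "degree f \<ge> 1"
    and bez: "formal_deriv f * w = 1 + f * t" and p: "prime p"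
  obtains n :: nat and c \<alpha> where "cong_mod {f, of_nat p} b (\<Sum>j<n. smult (c j) (\<alpha> j ^ p))"
proof -
  obtain v where v: "satisfies_linrec f v" "\<And>j. j < degree f \<Longrightarrow> v j = of_bool (j = degree f - 1)"
    using linrec_fundamental_solution[OF monic \<open>degree f \<ge> 1\<close>] by blast
  define e where "e = [:w:] * diff_quotient f"
  define g where "g = lift_coeffs (b * formal_deriv f)"
  define J where "J = {[:f:], lift_coeffs f, [:of_nat p:]}"
  define c where "c j = seq_pairing v (b * formal_deriv f * monom 1 (p * j))" for j
  have "of_nat p \<in> J" by (simp add: J_def of_nat_poly)
  have "cong_mod J ([:b:] * diff_quotient f) (g * e)"
    using lift_deriv_mult_diag_idempotent[OF bez, of b]
    by (auto simp: J_def g_def e_def intro: cong_mod_sym cong_mod_mono)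
  also have "cong_mod J (g * e) (g * e ^ p)"
  proof -
    have "p = Suc (p - 1)" using prime_gt_0_nat[OF p] by simp
    then have "cong_mod {[:f:], lift_coeffs f} (e ^ p) e"
      using diag_idempotent_power[OF bez, of "p - 1"] by (simp only: e_def)
    then show ?thesis
      by (auto simp: J_def intro!: cong_mod_mult_left intro: cong_mod_sym cong_mod_mono)
  qed
  also have "cong_mod J (g * e ^ p) (g * frob_poly p e)"
    using cong_mod_power_prime_poly[OF p, of e] \<open>of_nat p \<in> J\<close>
    by (auto intro: cong_mod_mult_left cong_mod_mono)
  also have "g * frob_poly p e =
      (\<Sum>j\<le>degree e. [:coeff e j ^ p:] * lift_coeffs (b * formal_deriv f * monom 1 (p * j)))"
    unfolding frob_poly_def sum_distrib_left
    by (intro sum.cong refl, simp only: g_def lift_coeffs_mult lift_coeffs_monom)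
      (simp only: monom_altdef smult_eq_const_mult one_pCons[symmetric] mult_1_left ac_simps)
  finally have "cong_mod {f, of_nat p} (seq_pairing (\<lambda>j. [:v j:]) ([:b:] * diff_quotient f))
      (seq_pairing (\<lambda>j. [:v j:]) (\<Sum>j\<le>degree e. [:coeff e j ^ p:] * lift_coeffs (b * formal_deriv f * monom 1 (p * j))))"
    unfolding J_def by (rule cong_mod_seq_pairing_lift[OF v(1)])
  then have red: "cong_mod {f, of_nat p} b (\<Sum>j<Suc (degree e). smult (c j) (coeff e j ^ p))"
    using seq_pairing_diff_quotient[OF \<open>degree f \<ge> 1\<close> v(2)] monic
    by (simp add: seq_pairing_smult seq_pairing_sum seq_pairing_lift_coeffs c_def lessThan_Suc_atMost
        mult.commute)
  then show ?thesis
    by (rule that)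
qed

lemma cong_mod_poly_in_xpow:
  fixes f w t b :: "'a::comm_ring_1 poly"
  assumes "lead_coeff f = 1" and "degree f \<ge> 1"
    and "formal_deriv f * w = 1 + f * t" and p: "prime p"
  shows "\<exists>r. poly_in_xpow (p ^ s) r \<and> cong_mod {f, of_nat p} b r"
proof (induction s arbitrary: b)
  case 0
  show ?case by (intro exI[of _ b]) (simp add: poly_in_xpow_def)
next
  case (Suc s)
  obtain n :: nat and c \<alpha> where b: "cong_mod {f, of_nat p} b (\<Sum>j<n. smult (c j) (\<alpha> j ^ p))"
    by (rule frobenius_spans_mod_prime[OF assms])
  have "\<forall>j. \<exists>r. poly_in_xpow (p ^ s) r \<and> cong_mod {f, of_nat p} (\<alpha> j) r"
    using Suc.IH by blast
  then obtain r where r: "\<And>j. poly_in_xpow (p ^ s) (r j) \<and> cong_mod {f, of_nat p} (\<alpha> j) (r j)"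
    by metis
  have "cong_mod {f, of_nat p} (\<alpha> j ^ p) (frob_poly p (r j))" for j
  proof -
    have "cong_mod {f, of_nat p} (\<alpha> j ^ p) (r j ^ p)"
      using r by (intro cong_mod_power) simp
    also have "cong_mod {f, of_nat p} (r j ^ p) (frob_poly p (r j))"
      using cong_mod_power_prime_poly[OF p] by (rule cong_mod_mono) simp
    finally show ?thesis .
  qed
  then have "cong_mod {f, of_nat p} (\<Sum>j<n. smult (c j) (\<alpha> j ^ p)) (\<Sum>j<n. smult (c j) (frob_poly p (r j)))"
    unfolding smult_eq_const_mult by (intro cong_mod_sum cong_mod_mult_left)
  with b have "cong_mod {f, of_nat p} b (\<Sum>j<n. smult (c j) (frob_poly p (r j)))"
    by (rule cong_mod_trans)
  moreover have "poly_in_xpow (p ^ Suc s) (\<Sum>j<n. smult (c j) (frob_poly p (r j)))"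
    using r by (auto intro!: poly_in_xpow_sum poly_in_xpow_smult poly_in_xpow_frob_poly)
  ultimately show ?case by blast
qed

lemma poly_in_xpow_decomposition:
  fixes f :: "'a::comm_ring_1 poly"
  assumes "\<And>b. \<exists>r. poly_in_xpow N r \<and> cong_mod {f, [:c:]} b r"
  shows "\<exists>r u v. poly_in_xpow N r \<and> b = r + f * u + smult (c ^ k) v"
proof (induction k arbitrary: b)
  case 0
  show ?case by (intro exI[of _ 0] exI[of _ b]) simp
next
  case (Suc k)
  obtain r u v where 1: "poly_in_xpow N r" "b = r + f * u + smult (c ^ k) v"
    using Suc.IH by blast
  obtain r' u' v' where 2: "poly_in_xpow N r'" "v - r' - u' * f - v' * [:c:] = 0"
    using assms[of v] unfolding cong_mod_def ring_module.span_breakdown_eq ring_module.span_empty by blast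
  have "b = (r + smult (c ^ k) r') + f * (u + smult (c ^ k) u') + smult (c ^ Suc k) v'"
    using 1(2) 2(2) by (simp add: algebra_simps smult_add_right eq_iff_diff_eq_0[symmetric])
  moreover have "poly_in_xpow N (r + smult (c ^ k) r')"
    using 1(1) 2(1) by (intro poly_in_xpow_add poly_in_xpow_smult)
  ultimately show ?case by blast
qed

lemma linrec_seq_eq_0:
  fixes f w t :: "'a::comm_ring_1 poly" and u :: "nat \<Rightarrow> 'a"
  assumes "lead_coeff f = 1" and "degree f \<ge> 1"
    and "formal_deriv f * w = 1 + f * t" and "prime p"
    and sep: "p_adically_separated p TYPE('a)"
    and u: "satisfies_linrec f u" "\<And>n. of_nat n dvd u n"
  shows "u n = 0"
proof -
  have "of_nat p ^ s dvd u n" for s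
  proof -
    obtain r g h where r: "poly_in_xpow (p ^ s) r" "monom 1 n = r + f * g + smult (of_nat p ^ s) h"
      using poly_in_xpow_decomposition[of "p ^ s" f "of_nat p"] cong_mod_poly_in_xpow[OF assms(1-4)]
      by (metis of_nat_poly)
    have "u n = seq_pairing u r + of_nat p ^ s * seq_pairing u h"
      using seq_pairing_mult_eq_0[OF u(1), of g] arg_cong[OF r(2), of "seq_pairing u"]
      by (simp add: seq_pairing_monom seq_pairing_add seq_pairing_smult)
    moreover have "of_nat p ^ s dvd seq_pairing u r"
    proof (rule seq_pairing_poly_in_xpow_dvd[OF r(1)])
      fix m assume "p ^ s dvd m"
      then obtain q where "m = p ^ s * q" by blast
      then show "of_nat p ^ s dvd u m"
        using u(2)[of m] by (metis dvd_mult_left of_nat_mult of_nat_power)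
    qed
    ultimately show ?thesis by simp
  qed
  with sep show ?thesis
    unfolding p_adically_separated_def by blast
qed

section \<open>Expansions at infinity\<close>

text \<open>Laurent series are in \<open>y = 1/x\<close>, so a polynomial in \<open>x\<close> is expanded by substituting
  \<open>fls_X_inv\<close> for \<open>x\<close>.\<close>

definition fls_of_poly_x :: "'a::comm_ring_1 poly \<Rightarrow> 'a fls" where
  "fls_of_poly_x q = poly (map_poly fls_const q) fls_X_inv"

interpretation fls_const_hom: comm_ring_hom "fls_const :: 'a::comm_ring_1 \<Rightarrow> 'a fls"
  by unfold_locales (simp_all add: fls_plus_const[symmetric])

interpretation fls_const_poly_hom: map_poly_comm_ring_hom "fls_const :: 'a::comm_ring_1 \<Rightarrow> 'a fls" ..

lemma fls_of_poly_x_add: "fls_of_poly_x (a + b) = fls_of_poly_x a + fls_of_poly_x b"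
  by (simp add: fls_of_poly_x_def fls_const_poly_hom.hom_add)

lemma fls_of_poly_x_mult: "fls_of_poly_x (a * b) = fls_of_poly_x a * fls_of_poly_x b"
  by (simp add: fls_of_poly_x_def fls_const_poly_hom.hom_mult)

lemma fls_of_poly_x_pCons: "fls_of_poly_x (pCons a q) = fls_const a + fls_X_inv * fls_of_poly_x q"
  by (cases "a = 0 \<and> q = 0") (auto simp: fls_of_poly_x_def map_poly_pCons)

lemma fls_of_poly_x_0 [simp]: "fls_of_poly_x 0 = 0"
  by (simp add: fls_of_poly_x_def)

lemma fls_of_poly_x_const: "fls_of_poly_x [:c:] = fls_const c"
  by (simp add: fls_of_poly_x_pCons)

lemma fls_of_poly_x_smult: "fls_of_poly_x (smult c q) = fls_const c * fls_of_poly_x q"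
  using fls_of_poly_x_mult[of "[:c:]" q] by (simp add: fls_of_poly_x_const)

lemma fls_of_poly_x_sum: "fls_of_poly_x (\<Sum>i\<in>A. g i) = (\<Sum>i\<in>A. fls_of_poly_x (g i))"
  by (induction A rule: infinite_finite_induct) (auto simp: fls_of_poly_x_add)

lemma fls_of_poly_x_monom: "fls_of_poly_x (monom c k) = fls_const c * fls_X_inv ^ k"
  by (simp add: fls_of_poly_x_def map_poly_monom poly_monom)

lemma fls_nth_fls_of_poly_x: "fls_nth (fls_of_poly_x q) m = (if m \<le> 0 then coeff q (nat (- m)) else 0)"
proof (induction q arbitrary: m)
  case (pCons a q)
  have "nat (- m) = Suc (nat (- m - 1))" if "m < 0"
    using that by simp
  then show ?case
    using pCons by (auto simp: fls_of_poly_x_pCons fls_X_inv_times_conv_shift coeff_pCons)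
qed simp

lemma fls_nth_fls_X_power_mult: "fls_nth (fls_X ^ k * G) n = fls_nth G (n - int k)"
  by (simp add: fls_X_power_conv_shift_1 fls_shifted_times_simps)

lemma fps_to_fls_reflect_poly: "fps_to_fls (fps_of_poly (reflect_poly f)) = fls_X ^ degree f * fls_of_poly_x f"
proof (rule fls_eqI)
  fix n :: int
  show "fls_nth (fps_to_fls (fps_of_poly (reflect_poly f))) n = fls_nth (fls_X ^ degree f * fls_of_poly_x f) n"
  proof (cases "n < 0")
    case True
    then have "coeff f (nat (int (degree f) - n)) = 0" by (intro coeff_eq_0) auto
    with True show ?thesis
      by (simp add: fls_nth_fls_X_power_mult fls_nth_fls_of_poly_x)
  next
    case False
    then obtain m where m: "n = int m" by (metis nonneg_int_cases not_less)
    show ?thesis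
    proof (cases "m \<le> degree f")
      case True
      then have "nat (int (degree f) - n) = degree f - m" using m by simp
      then show ?thesis using True m by (simp add: fls_nth_fls_X_power_mult fls_nth_fls_of_poly_x coeff_reflect_poly)
    next
      case False
      then show ?thesis using m by (simp add: fls_nth_fls_X_power_mult fls_nth_fls_of_poly_x coeff_reflect_poly)
    qed
  qed
qed

definition fls_inv_poly :: "'a::comm_ring_1 poly \<Rightarrow> 'a fls" where
  "fls_inv_poly f = fls_X ^ degree f * fps_to_fls (rev_inv f)"

lemma fls_X_mult_X_inv: "fls_X * fls_X_inv = (1 :: 'a::comm_ring_1 fls)"
  by (simp add: fls_X_inv_times_conv_shift fls_X_conv_shift_1)

lemma fls_X_inv_power_mult_X_power:
  assumes "k \<le> N"
  shows "fls_X_inv ^ k * fls_X ^ N = (fls_X ^ (N - k) :: 'a::comm_ring_1 fls)"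
proof -
  have "fls_X ^ N = fls_X ^ k * (fls_X ^ (N - k) :: 'a fls)"
    using assms by (simp add: power_add[symmetric])
  then have "fls_X_inv ^ k * fls_X ^ N = (fls_X * fls_X_inv) ^ k * (fls_X ^ (N - k) :: 'a fls)"
    by (simp add: power_mult_distrib algebra_simps)
  then show ?thesis
    by (simp add: fls_X_mult_X_inv)
qed

lemma fls_of_poly_x_mult_inv_poly:
  assumes "lead_coeff f = 1"
  shows "fls_of_poly_x f * fls_inv_poly f = 1"
proof -
  have "fls_of_poly_x f * fls_inv_poly f = fps_to_fls (fps_of_poly (reflect_poly f)) * fps_to_fls (rev_inv f)"
    unfolding fls_inv_poly_def fps_to_fls_reflect_poly by (simp only: ac_simps)
  also have "\<dots> = 1"
    unfolding fls_times_fps_to_fls[symmetric] reflect_poly_mult_rev_inv[OF assms] by simp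
  finally show ?thesis .
qed

text \<open>\<open>d/dx = - y\<^sup>2 d/dy\<close>\<close>

definition deriv_x :: "'a::comm_ring_1 fls \<Rightarrow> 'a fls" where
  "deriv_x G = - (fls_X ^ 2 * fls_deriv G)"

lemma deriv_x_add: "deriv_x (a + b) = deriv_x a + deriv_x b"
  by (simp add: deriv_x_def algebra_simps)

lemma deriv_x_mult: "deriv_x (a * b) = deriv_x a * b + a * deriv_x b"
  by (simp add: deriv_x_def algebra_simps)

lemma deriv_x_const [simp]: "deriv_x (fls_const c) = 0"
  by (simp add: deriv_x_def)

lemma deriv_x_0 [simp]: "deriv_x 0 = 0"
  by (simp add: deriv_x_def)

lemma deriv_x_1 [simp]: "deriv_x 1 = 0"
  by (simp add: deriv_x_def)

lemma deriv_x_of_nat [simp]: "deriv_x (of_nat n) = 0"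
  by (simp add: deriv_x_def)

lemma deriv_x_X_inv: "deriv_x fls_X_inv = 1"
proof -
  have "deriv_x fls_X_inv = (fls_X * fls_X_inv) ^ 2"
    by (simp add: deriv_x_def power_mult_distrib)
  then show ?thesis
    by (simp add: fls_X_mult_X_inv)
qed

lemma deriv_x_power: "deriv_x (a ^ Suc n) = of_nat (Suc n) * a ^ n * deriv_x a"
  by (induction n) (simp_all add: deriv_x_mult algebra_simps)

lemma fps_to_fls_d_form: "fps_to_fls (d_form G) = deriv_x (fps_to_fls G)"
  by (simp add: d_form_def deriv_x_def fls_times_fps_to_fls fps_to_fls_power fls_deriv_fps_to_fls)

lemma deriv_x_fls_of_poly_x: "deriv_x (fls_of_poly_x q) = fls_of_poly_x (formal_deriv q)"
proof (induction q)
  case (pCons a q)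
  then show ?case
    by (simp add: fls_of_poly_x_pCons deriv_x_add deriv_x_mult deriv_x_X_inv formal_deriv_pCons
        fls_of_poly_x_add)
qed (simp add: formal_deriv_def)

lemma deriv_x_fls_inv_poly:
  assumes "lead_coeff f = 1"
  shows "deriv_x (fls_inv_poly f) = - (fls_inv_poly f ^ 2 * fls_of_poly_x (formal_deriv f))"
proof -
  let ?W = "fls_inv_poly f"
  have "fls_of_poly_x (formal_deriv f) * ?W + fls_of_poly_x f * deriv_x ?W = 0"
    using arg_cong[OF fls_of_poly_x_mult_inv_poly[OF assms], of deriv_x]
    by (simp add: deriv_x_mult deriv_x_fls_of_poly_x)
  then have "?W ^ 2 * fls_of_poly_x (formal_deriv f) + (fls_of_poly_x f * ?W) * deriv_x ?W = 0"
    by (metis (no_types, lifting) distrib_left mult.assoc mult.commute mult_zero_right power2_eq_square)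
  then show ?thesis
    by (simp add: fls_of_poly_x_mult_inv_poly[OF assms] eq_neg_iff_add_eq_0 add.commute)
qed

lemma deriv_x_poly_mult_inv_poly_power:
  assumes "lead_coeff f = 1"
  shows "deriv_x (fls_of_poly_x q * fls_inv_poly f ^ Suc l) =
    fls_of_poly_x (formal_deriv q) * fls_inv_poly f ^ Suc l -
    of_nat (Suc l) * fls_of_poly_x (q * formal_deriv f) * fls_inv_poly f ^ Suc (Suc l)"
proof -
  let ?W = "fls_inv_poly f"
  have "deriv_x (fls_of_poly_x q * ?W ^ Suc l) = fls_of_poly_x (formal_deriv q) * ?W ^ Suc l +
      fls_of_poly_x q * (of_nat (Suc l) * ?W ^ l * - (?W ^ 2 * fls_of_poly_x (formal_deriv f)))"
    by (simp only: deriv_x_mult deriv_x_power deriv_x_fls_of_poly_x deriv_x_fls_inv_poly[OF assms])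
  moreover have "?W ^ Suc (Suc l) = ?W ^ l * ?W ^ 2"
    by (simp add: power_add[symmetric])
  ultimately show ?thesis
    by (simp add: fls_of_poly_x_mult algebra_simps)
qed

lemma fps_to_fls_gen_fps:
  assumes "k \<le> degree f * (l + 1)"
  shows "fps_to_fls (gen_fps f l k) = of_nat (fact l) * fls_of_poly_x (monom 1 k) * fls_inv_poly f ^ (l + 1)"
proof -
  have "fls_inv_poly f ^ (l + 1) = fls_X ^ (degree f * (l + 1)) * fps_to_fls (rev_inv f) ^ (l + 1)"
    unfolding fls_inv_poly_def power_mult_distrib power_mult ..
  then have "of_nat (fact l) * fls_of_poly_x (monom 1 k) * fls_inv_poly f ^ (l + 1) =
      of_nat (fact l) * (fls_X_inv ^ k * fls_X ^ (degree f * (l + 1))) * fps_to_fls (rev_inv f) ^ (l + 1)"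
    by (simp only: fls_of_poly_x_monom fls_const_1 mult_1_left ac_simps)
  also have "\<dots> = of_nat (fact l) * fls_X ^ (degree f * (l + 1) - k) * fps_to_fls (rev_inv f) ^ (l + 1)"
    by (simp only: fls_X_inv_power_mult_X_power[OF assms])
  also have "\<dots> = fps_to_fls (gen_fps f l k)"
    by (simp add: gen_fps_def fls_times_fps_to_fls fps_to_fls_power fls_of_nat)
  finally show ?thesis ..
qed

lemma span_gens_induct [consumes 1, case_names zero add gen]:
  assumes "a \<in> span_gens f I"
    and "P 0" and "\<And>a b. P a \<Longrightarrow> P b \<Longrightarrow> P (a + b)"
    and "\<And>l k r. (l, k) \<in> I \<Longrightarrow> P (fps_const r * gen_fps f l k)"
  shows "P a"
proof -
  obtain S c where S: "finite S" "S \<subseteq> I" and a: "a = (\<Sum>(l, k)\<in>S. fps_const (c (l, k)) * gen_fps f l k)"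
    using assms(1) unfolding span_gens_def by blast
  from S have "P (\<Sum>(l, k)\<in>S. fps_const (c (l, k)) * gen_fps f l k)"
  proof (induction S rule: finite_induct)
    case (insert x S)
    then show ?case
      using assms(3,4) by (cases x) auto
  qed (simp add: assms(2))
  with a show ?thesis by simp
qed

lemma span_gens_0: "0 \<in> span_gens f I"
  unfolding span_gens_def by (rule CollectI, rule exI[of _ "{}"]) simp

lemma span_gens_gen: "(l, k) \<in> I \<Longrightarrow> fps_const r * gen_fps f l k \<in> span_gens f I"
  unfolding span_gens_def by (rule CollectI, rule exI[of _ "{(l, k)}"], rule exI[of _ "\<lambda>_. r"]) simp

lemma span_gens_add:
  assumes "a \<in> span_gens f I" "b \<in> span_gens f I"
  shows "a + b \<in> span_gens f I"
proof -
  obtain S1 c1 where 1: "a = (\<Sum>(l, k)\<in>S1. fps_const (c1 (l, k)) * gen_fps f l k)" "finite S1" "S1 \<subseteq> I"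
    using assms(1) unfolding span_gens_def by blast
  obtain S2 c2 where 2: "b = (\<Sum>(l, k)\<in>S2. fps_const (c2 (l, k)) * gen_fps f l k)" "finite S2" "S2 \<subseteq> I"
    using assms(2) unfolding span_gens_def by blast
  define c where "c x = (if x \<in> S1 then c1 x else 0) + (if x \<in> S2 then c2 x else 0)" for x
  have "a = (\<Sum>(l, k)\<in>S1 \<union> S2. fps_const (if (l, k) \<in> S1 then c1 (l, k) else 0) * gen_fps f l k)"
    unfolding 1(1) by (rule sum.mono_neutral_cong_left) (use 1 2 in auto)
  moreover have "b = (\<Sum>(l, k)\<in>S1 \<union> S2. fps_const (if (l, k) \<in> S2 then c2 (l, k) else 0) * gen_fps f l k)"
    unfolding 2(1) by (rule sum.mono_neutral_cong_left) (use 1 2 in auto)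
  ultimately have "a + b = (\<Sum>(l, k)\<in>S1 \<union> S2. fps_const (c (l, k)) * gen_fps f l k)"
    by (simp add: c_def sum.distrib[symmetric] case_prod_beta distrib_right[symmetric])
  then show ?thesis
    unfolding span_gens_def using 1 2 by blast
qed

lemma span_gens_const_mult: "a \<in> span_gens f I \<Longrightarrow> fps_const r * a \<in> span_gens f I"
  by (induction rule: span_gens_induct)
    (auto simp: distrib_left span_gens_0 span_gens_add span_gens_gen simp flip: mult.assoc)

lemma span_gens_diff: "a \<in> span_gens f I \<Longrightarrow> b \<in> span_gens f I \<Longrightarrow> a - b \<in> span_gens f I"
  using span_gens_add[of a f I "- b"] span_gens_const_mult[of b f I "- 1"]
  by (simp add: fps_const_neg[symmetric] del: fps_const_neg)

lemma span_gens_sum: "(\<And>i. i \<in> A \<Longrightarrow> g i \<in> span_gens f I) \<Longrightarrow> (\<Sum>i\<in>A. g i) \<in> span_gens f I"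
  by (induction A rule: infinite_finite_induct) (auto intro: span_gens_add span_gens_0)

definition gen_poly_fps :: "'a::comm_ring_1 poly \<Rightarrow> nat \<Rightarrow> 'a poly \<Rightarrow> 'a fps" where
  "gen_poly_fps f l q = (\<Sum>k\<le>degree q. fps_const (coeff q k) * gen_fps f l k)"

lemma gen_poly_fps_in_span_gens:
  "(\<And>k. k \<le> degree q \<Longrightarrow> (l, k) \<in> I) \<Longrightarrow> gen_poly_fps f l q \<in> span_gens f I"
  unfolding gen_poly_fps_def by (intro span_gens_sum span_gens_gen) auto

lemma fps_to_fls_sum: "fps_to_fls (\<Sum>i\<in>A. g i) = (\<Sum>i\<in>A. fps_to_fls (g i))"
  by (induction A rule: infinite_finite_induct) auto

lemma fps_to_fls_gen_poly_fps:
  assumes "degree q \<le> degree f * (l + 1)"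
  shows "fps_to_fls (gen_poly_fps f l q) = of_nat (fact l) * fls_of_poly_x q * fls_inv_poly f ^ (l + 1)"
proof -
  have "fps_to_fls (gen_poly_fps f l q) =
      (\<Sum>k\<le>degree q. fls_of_poly_x (monom (coeff q k) k)) * (of_nat (fact l) * fls_inv_poly f ^ (l + 1))"
    unfolding gen_poly_fps_def fps_to_fls_sum sum_distrib_right
    by (intro sum.cong refl) (use assms in \<open>simp add: fls_times_fps_to_fls fps_to_fls_gen_fps
        fls_of_poly_x_monom\<close>)
  also have "(\<Sum>k\<le>degree q. fls_of_poly_x (monom (coeff q k) k)) = fls_of_poly_x q"
    by (simp add: fls_of_poly_x_sum[symmetric] poly_as_sum_of_monoms)
  finally show ?thesis
    by (simp add: ac_simps)
qed

section \<open>Reduction of pole order\<close>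

definition dO_f_plus_Rx_over_f :: "'a::comm_ring_1 poly \<Rightarrow> 'a fls set" where
  "dO_f_plus_Rx_over_f f =
    {deriv_x (fps_to_fls g) + fls_of_poly_x h * fls_inv_poly f | g h. g \<in> O_f f}"

lemma dO_f_plus_Rx_over_f_add:
  assumes "a \<in> dO_f_plus_Rx_over_f f" "b \<in> dO_f_plus_Rx_over_f f"
  shows "a + b \<in> dO_f_plus_Rx_over_f f"
proof -
  obtain g1 h1 g2 h2 where "g1 \<in> O_f f" "a = deriv_x (fps_to_fls g1) + fls_of_poly_x h1 * fls_inv_poly f"
    and "g2 \<in> O_f f" "b = deriv_x (fps_to_fls g2) + fls_of_poly_x h2 * fls_inv_poly f"
    using assms unfolding dO_f_plus_Rx_over_f_def by blast
  moreover have "g1 + g2 \<in> O_f f" using calculation by (simp add: O_f_def span_gens_add)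
  ultimately show ?thesis
    unfolding dO_f_plus_Rx_over_f_def
    by (intro CollectI exI[of _ "g1 + g2"] exI[of _ "h1 + h2"])
      (simp add: deriv_x_add fls_of_poly_x_add algebra_simps)
qed

lemma dO_f_plus_Rx_over_f_const_mult:
  assumes "a \<in> dO_f_plus_Rx_over_f f"
  shows "fls_const r * a \<in> dO_f_plus_Rx_over_f f"
proof -
  obtain g h where "g \<in> O_f f" "a = deriv_x (fps_to_fls g) + fls_of_poly_x h * fls_inv_poly f"
    using assms unfolding dO_f_plus_Rx_over_f_def by blast
  moreover have "fps_const r * g \<in> O_f f" using calculation by (simp add: O_f_def span_gens_const_mult)
  ultimately show ?thesis
    unfolding dO_f_plus_Rx_over_f_def
    by (intro CollectI exI[of _ "fps_const r * g"] exI[of _ "smult r h"])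
      (simp add: fls_times_fps_to_fls deriv_x_mult fls_of_poly_x_smult algebra_simps)
qed

lemma dO_f_plus_Rx_over_f_of_nat_mult:
  "a \<in> dO_f_plus_Rx_over_f f \<Longrightarrow> of_nat n * a \<in> dO_f_plus_Rx_over_f f"
  using dO_f_plus_Rx_over_f_const_mult[of a f "of_nat n"] by (simp add: fls_of_nat)

lemma dO_f_plus_Rx_over_f_diff:
  "a \<in> dO_f_plus_Rx_over_f f \<Longrightarrow> b \<in> dO_f_plus_Rx_over_f f \<Longrightarrow> a - b \<in> dO_f_plus_Rx_over_f f"
  using dO_f_plus_Rx_over_f_add[of a f "- b"] dO_f_plus_Rx_over_f_const_mult[of b f "- 1"]
  by simp

lemma deriv_x_in_dO_f_plus_Rx_over_f: "g \<in> O_f f \<Longrightarrow> deriv_x (fps_to_fls g) \<in> dO_f_plus_Rx_over_f f"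
  unfolding dO_f_plus_Rx_over_f_def by (intro CollectI exI[of _ g] exI[of _ 0]) simp

lemma poly_mult_inv_poly_in_dO_f_plus_Rx_over_f: "fls_of_poly_x h * fls_inv_poly f \<in> dO_f_plus_Rx_over_f f"
  unfolding dO_f_plus_Rx_over_f_def using span_gens_0[of f]
  by (intro CollectI exI[of _ 0] exI[of _ h]) (simp add: O_f_def)

lemma monic_deriv_division:
  fixes f q w t :: "'a::comm_ring_1 poly"
  assumes monic: "lead_coeff f = 1" and "degree f \<ge> 2"
    and bez: "formal_deriv f * w = 1 + f * t"
  obtains a b where "q = f * a + b * formal_deriv f" and "degree b < degree f"
    and "degree a + degree f \<le> max (degree q) (2 * degree f - 2)"
proof -
  obtain c b where div: "pseudo_divmod (q * w) f = (c, b)"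
    by (cases "pseudo_divmod (q * w) f")
  have "f \<noteq> 0" using monic by auto
  have qw: "q * w = f * c + b"
    using pseudo_divmod(1)[OF \<open>f \<noteq> 0\<close> div] monic by simp
  have "degree b < degree f"
    using pseudo_divmod(2)[OF \<open>f \<noteq> 0\<close> div] assms(2) by auto
  define a where "a = c * formal_deriv f - q * t"
  have q: "q = f * a + b * formal_deriv f"
  proof -
    have "q = q * (formal_deriv f * w) - f * (q * t)"
      using bez by (simp add: algebra_simps)
    also have "\<dots> = (q * w) * formal_deriv f - f * (q * t)"
      by (simp only: ac_simps)
    also have "\<dots> = f * a + b * formal_deriv f"
      by (simp add: qw a_def algebra_simps)
    finally show ?thesis .
  qed
  have "degree (b * formal_deriv f) \<le> 2 * degree f - 2"
    using degree_mult_le[of b "formal_deriv f"] degree_formal_deriv_le[of f] \<open>degree b < degree f\<close>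
    by linarith
  moreover have "degree (f * a) \<le> max (degree q) (degree (b * formal_deriv f))"
    using degree_diff_le_max[of q "b * formal_deriv f"] q by (simp add: algebra_simps)
  ultimately have "degree a + degree f \<le> max (degree q) (2 * degree f - 2)"
    using assms(2) by (cases "a = 0") (auto simp: degree_monic_mult[OF monic])
  with q \<open>degree b < degree f\<close> show ?thesis
    by (rule that)
qed

lemma pole_order_reduction_eq:
  assumes "lead_coeff f = 1" and "q = f * a + b * formal_deriv f"
  shows "of_nat (fact (Suc l)) * fls_of_poly_x q * fls_inv_poly f ^ Suc (Suc l) =
    of_nat (Suc l) * (of_nat (fact l) * fls_of_poly_x a * fls_inv_poly f ^ Suc l) +
    of_nat (fact l) * fls_of_poly_x (formal_deriv b) * fls_inv_poly f ^ Suc l -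
    deriv_x (of_nat (fact l) * fls_of_poly_x b * fls_inv_poly f ^ Suc l)"
proof -
  let ?W = "fls_inv_poly f"
  have "fls_of_poly_x q * ?W ^ Suc (Suc l) =
      fls_of_poly_x a * (fls_of_poly_x f * ?W) * ?W ^ Suc l +
      fls_of_poly_x (b * formal_deriv f) * ?W ^ Suc (Suc l)"
    by (simp add: assms(2) fls_of_poly_x_add fls_of_poly_x_mult algebra_simps)
  then have q: "fls_of_poly_x q * ?W ^ Suc (Suc l) =
      fls_of_poly_x a * ?W ^ Suc l + fls_of_poly_x (b * formal_deriv f) * ?W ^ Suc (Suc l)"
    by (simp add: fls_of_poly_x_mult_inv_poly[OF assms(1)])
  have "of_nat (fact (Suc l)) * fls_of_poly_x q * ?W ^ Suc (Suc l) =
      of_nat (Suc l) * of_nat (fact l) * (fls_of_poly_x q * ?W ^ Suc (Suc l))"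
    by (simp only: fact_Suc of_nat_mult of_nat_id ac_simps)
  also have "\<dots> = of_nat (Suc l) * of_nat (fact l) *
      (fls_of_poly_x a * ?W ^ Suc l + fls_of_poly_x (b * formal_deriv f) * ?W ^ Suc (Suc l))"
    by (simp only: q)
  also have "\<dots> = of_nat (Suc l) * (of_nat (fact l) * fls_of_poly_x a * ?W ^ Suc l) +
      of_nat (fact l) * fls_of_poly_x (formal_deriv b) * ?W ^ Suc l -
      of_nat (fact l) * deriv_x (fls_of_poly_x b * ?W ^ Suc l)"
    unfolding deriv_x_poly_mult_inv_poly_power[OF assms(1)] by (simp add: algebra_simps)
  also have "of_nat (fact l) * deriv_x (fls_of_poly_x b * ?W ^ Suc l) =
      deriv_x (of_nat (fact l) * fls_of_poly_x b * ?W ^ Suc l)"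
    by (simp add: deriv_x_mult mult.assoc)
  finally show ?thesis .
qed

lemma reduce_pole_order:
  fixes f w t :: "'a::comm_ring_1 poly"
  assumes monic: "lead_coeff f = 1" and "degree f \<ge> 2"
    and bez: "formal_deriv f * w = 1 + f * t"
  shows "degree q + 2 \<le> degree f * (l + 1) \<Longrightarrow>
    of_nat (fact l) * fls_of_poly_x q * fls_inv_poly f ^ (l + 1) \<in> dO_f_plus_Rx_over_f f"
proof (induction l arbitrary: q)
  case 0
  then show ?case
    using poly_mult_inv_poly_in_dO_f_plus_Rx_over_f[of q f] by simp
next
  case (Suc l)
  obtain a b where q: "q = f * a + b * formal_deriv f" and "degree b < degree f"
    and deg_a: "degree a + degree f \<le> max (degree q) (2 * degree f - 2)"
    using monic_deriv_division[OF monic \<open>degree f \<ge> 2\<close> bez] by blast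
  have "degree f \<le> degree f * (l + 1)" by simp
  have "of_nat (fact l) * fls_of_poly_x a * fls_inv_poly f ^ Suc l \<in> dO_f_plus_Rx_over_f f"
    using Suc.IH[of a] Suc.prems deg_a \<open>degree f \<le> degree f * (l + 1)\<close> by auto
  moreover have "of_nat (fact l) * fls_of_poly_x (formal_deriv b) * fls_inv_poly f ^ Suc l
      \<in> dO_f_plus_Rx_over_f f"
    using Suc.IH[of "formal_deriv b"] degree_formal_deriv_le[of b] \<open>degree b < degree f\<close>
      \<open>degree f \<le> degree f * (l + 1)\<close> \<open>degree f \<ge> 2\<close>
    by simp
  moreover have "deriv_x (of_nat (fact l) * fls_of_poly_x b * fls_inv_poly f ^ Suc l)
      \<in> dO_f_plus_Rx_over_f f"
  proof -
    have "degree b + 1 \<le> degree f * (l + 1)"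
      using \<open>degree b < degree f\<close> \<open>degree f \<le> degree f * (l + 1)\<close> by linarith
    then show ?thesis
      using deriv_x_in_dO_f_plus_Rx_over_f[of "gen_poly_fps f l b" f]
      by (simp add: fps_to_fls_gen_poly_fps O_f_def gen_poly_fps_in_span_gens)
  qed
  ultimately have "of_nat (fact (Suc l)) * fls_of_poly_x q * fls_inv_poly f ^ Suc (Suc l)
      \<in> dO_f_plus_Rx_over_f f"
    unfolding pole_order_reduction_eq[OF monic q]
    by (intro dO_f_plus_Rx_over_f_diff dO_f_plus_Rx_over_f_add dO_f_plus_Rx_over_f_of_nat_mult)
  then show ?case by simp
qed

lemma O_f_circ_in_dO_f_plus_Rx_over_f:
  fixes f w t :: "'a::comm_ring_1 poly"
  assumes "lead_coeff f = 1" and "degree f \<ge> 2"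
    and "formal_deriv f * w = 1 + f * t" and "\<omega> \<in> O_f_circ f"
  shows "fps_to_fls \<omega> \<in> dO_f_plus_Rx_over_f f"
  using assms(4) unfolding O_f_circ_def
proof (induction rule: span_gens_induct)
  case zero
  show ?case
    using deriv_x_in_dO_f_plus_Rx_over_f[of 0 f] span_gens_0[of f] by (simp add: O_f_def)
next
  case (add a b)
  then show ?case by (simp add: dO_f_plus_Rx_over_f_add)
next
  case (gen l k r)
  then have "of_nat (fact l) * fls_of_poly_x (monom 1 k) * fls_inv_poly f ^ (l + 1) \<in> dO_f_plus_Rx_over_f f"
    using degree_monom_le[of "1::'a" k] by (intro reduce_pole_order[OF assms(1-3)]) auto
  with gen show ?case
    by (simp add: fls_times_fps_to_fls fps_to_fls_gen_fps dO_f_plus_Rx_over_f_const_mult)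
qed

section \<open>Formally exact forms\<close>

lemma d_form_nth_0 [simp]: "d_form G $ 0 = 0"
  by (simp add: d_form_def fps_X_power_mult_nth)

lemma d_form_nth_Suc: "d_form G $ Suc m = - (of_nat m * G $ m)"
  by (cases m) (simp_all add: d_form_def fps_X_power_mult_nth)

text \<open>The coefficients \<open>u\<^sub>n\<close> of \<open>x\<^sup>-\<^sup>n\<^sup>-\<^sup>1 dx\<close> in a formally exact form \<open>h/f dx\<close> are divisible
  by \<open>n\<close> and satisfy the recurrence of \<open>f\<close>.\<close>

lemma formally_exact_poly_over_f_eq_0:
  fixes f w t h :: "'a::comm_ring_1 poly"
  assumes monic: "lead_coeff f = 1" and "degree f \<ge> 1"
    and "formal_deriv f * w = 1 + f * t" and "prime p"
    and "p_adically_separated p TYPE('a)"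
    and exact: "fps_to_fls (d_form G) = fls_of_poly_x h * fls_inv_poly f"
  shows "d_form G = 0"
proof -
  have "(fps_of_poly (reflect_poly f) * d_form G) $ m = 0" if "m > degree f" for m
  proof -
    have "fps_to_fls (fps_of_poly (reflect_poly f) * d_form G) =
        fls_X ^ degree f * fls_of_poly_x f * (fls_of_poly_x h * fls_inv_poly f)"
      by (simp only: fls_times_fps_to_fls fps_to_fls_reflect_poly exact)
    also have "\<dots> = fls_X ^ degree f * fls_of_poly_x h * (fls_of_poly_x f * fls_inv_poly f)"
      by (simp only: ac_simps)
    finally have "fps_to_fls (fps_of_poly (reflect_poly f) * d_form G) = fls_X ^ degree f * fls_of_poly_x h"
      by (simp add: fls_of_poly_x_mult_inv_poly[OF monic])
    then have "fls_nth (fps_to_fls (fps_of_poly (reflect_poly f) * d_form G)) (int m) =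
        fls_nth (fls_X ^ degree f * fls_of_poly_x h) (int m)"
      by (rule arg_cong)
    then show ?thesis
      using that by (simp add: fls_nth_fls_X_power_mult fls_nth_fls_of_poly_x)
  qed
  then have "satisfies_linrec f (\<lambda>n. d_form G $ Suc n)"
    by (rule satisfies_linrec_of_fps)
  then have "d_form G $ Suc n = 0" for n
    by (rule linrec_seq_eq_0[OF assms(1-5)]) (simp add: d_form_nth_Suc)
  then show ?thesis
    by (intro fps_ext) (metis d_form_nth_0 fps_zero_nth not0_implies_Suc)
qed

lemma d_form_add: "d_form (a + b) = d_form a + d_form b"
  by (simp add: d_form_def algebra_simps)

lemma d_form_diff: "d_form (a - b) = d_form a - d_form b"
  by (simp add: d_form_def algebra_simps)

lemma d_form_const_mult: "d_form (fps_const c * a) = fps_const c * d_form a"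
  by (simp add: d_form_def algebra_simps)

lemma d_form_gen_fps_in_O_f_circ:
  fixes f :: "'a::comm_ring_1 poly"
  assumes monic: "lead_coeff f = 1" and "degree f \<ge> 2"
    and k: "k + 1 \<le> degree f * (l + 1)"
  shows "d_form (gen_fps f l k) \<in> O_f_circ f"
proof -
  define q :: "'a poly" where "q = monom 1 k"
  have "degree q \<le> k" unfolding q_def by (rule degree_monom_le)
  have deg_dq: "degree (formal_deriv q) + 2 \<le> degree f * (l + 1)"
    using degree_formal_deriv_le[of q] \<open>degree q \<le> k\<close> k \<open>degree f \<ge> 2\<close> by (simp add: algebra_simps)
  have deg_qf: "degree (q * formal_deriv f) + 2 \<le> degree f * (Suc l + 1)"
    using degree_mult_le[of q "formal_deriv f"] degree_formal_deriv_le[of f] \<open>degree q \<le> k\<close> k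
      \<open>degree f \<ge> 2\<close>
    by (simp add: algebra_simps)
  have "fps_to_fls (d_form (gen_fps f l k)) =
      of_nat (fact l) * deriv_x (fls_of_poly_x q * fls_inv_poly f ^ Suc l)"
    using k by (simp add: fps_to_fls_d_form fps_to_fls_gen_fps q_def deriv_x_mult mult.assoc)
  also have "\<dots> = fps_to_fls (gen_poly_fps f l (formal_deriv q) - gen_poly_fps f (Suc l) (q * formal_deriv f))"
    using deg_dq deg_qf
    unfolding deriv_x_poly_mult_inv_poly_power[OF monic]
    by (simp add: fps_to_fls_gen_poly_fps fact_Suc algebra_simps)
  finally have "d_form (gen_fps f l k) = gen_poly_fps f l (formal_deriv q) - gen_poly_fps f (Suc l) (q * formal_deriv f)"
    by (rule fps_to_fls_eq_imp_fps_eq)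
  also have "\<dots> \<in> O_f_circ f"
    using deg_dq deg_qf unfolding O_f_circ_def by (intro span_gens_diff gen_poly_fps_in_span_gens) auto
  finally show ?thesis .
qed

lemma d_form_O_f_subset_O_f_circ:
  assumes "lead_coeff f = 1" and "degree f \<ge> 2" and "g \<in> O_f f"
  shows "d_form g \<in> O_f_circ f"
  using assms(3) unfolding O_f_def
proof (induction rule: span_gens_induct)
  case zero
  then show ?case using span_gens_0 by (simp add: d_form_def O_f_circ_def)
next
  case (add a b)
  then show ?case by (simp add: d_form_add O_f_circ_def span_gens_add)
next
  case (gen l k r)
  then show ?case
    using d_form_gen_fps_in_O_f_circ[OF assms(1,2)]
    by (simp add: d_form_const_mult O_f_circ_def span_gens_const_mult)
qed

lemma O_f_subset_O_formal: "g \<in> O_f f \<Longrightarrow> g \<in> O_formal"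
  unfolding O_f_def O_formal_def
  by (induction rule: span_gens_induct) (auto simp: gen_fps_def fps_X_power_mult_nth mult.left_commute)

theorem mainTheorem4:
  fixes f :: "'a::{comm_ring_1, ring_char_0} poly" and p :: nat
  assumes "prime p" and "odd p"
    and "p_adically_separated p TYPE('a)"
    and "p_adically_complete p TYPE('a)"
    and "lead_coeff f = 1" and "degree f \<ge> 2" and "poly f 0 \<noteq> 0"
    and "monic_discriminant f dvd 1"
  shows "Omega_f_circ f \<inter> d_form ` O_formal = d_form ` O_f f"
proof (intro equalityI subsetI)
  note monic = assms(5) and deg = assms(6)
  have "degree f \<ge> 1" using deg by simp
  then obtain w t where bez: "formal_deriv f * w = 1 + f * t"
    using formal_deriv_invertible_mod[OF assms(8)] by blast
  fix \<omega> assume "\<omega> \<in> Omega_f_circ f \<inter> d_form ` O_formal"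
  then obtain G where "\<omega> \<in> O_f_circ f" and G: "\<omega> = d_form G"
    unfolding Omega_f_circ_def by blast
  then obtain g h where g: "g \<in> O_f f"
    and gh: "fps_to_fls \<omega> = deriv_x (fps_to_fls g) + fls_of_poly_x h * fls_inv_poly f"
    using O_f_circ_in_dO_f_plus_Rx_over_f[OF monic deg bez] unfolding dO_f_plus_Rx_over_f_def by blast
  have "fps_to_fls (d_form (G - g)) = fls_of_poly_x h * fls_inv_poly f"
    using gh by (simp add: d_form_diff fps_to_fls_d_form G)
  then have "d_form (G - g) = 0"
    by (rule formally_exact_poly_over_f_eq_0[OF monic \<open>degree f \<ge> 1\<close> bez assms(1,3)])
  with g show "\<omega> \<in> d_form ` O_f f"
    by (simp add: G d_form_diff)
next
  fix \<omega> assume "\<omega> \<in> d_form ` O_f f"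
  then show "\<omega> \<in> Omega_f_circ f \<inter> d_form ` O_formal"
    using d_form_O_f_subset_O_f_circ[OF assms(5,6)] O_f_subset_O_formal
    by (auto simp: Omega_f_circ_def)
qed

end
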